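(* Let $q\ge2$ be an even integer. For integers $1\le c_1,c_2,c_3,c_4\le q/2$, define $$f(c_1,c_2,c_3,c_4)=\delta_{c_1,c_2}\delta_{c_3,c_4}-\#\big\{\,|q+1-2|x||\ :\ x\in\{c_1+c_2,\ c_3+c_4,\ c_1-c_2,\ c_3-c_4\}\big\}.$$ Then $f$ is invariant under every permutation of its four arguments.
   Context: $\#S$ denotes the cardinality of a set $S$, and $\delta$ is the Kronecker delta. *)

theory Defs
  imports "HOL-Combinatorics.Permutations"
begin

definition fq :: "int \<Rightarrow> int \<Rightarrow> int \<Rightarrow> int \<Rightarrow> int \<Rightarrow> int" where
  "fq q c1 c2 c3 c4 =
     (if c1 = c2 \<and> c3 = c4 then 1 else 0)
     - int (card ((\<lambda>x. \<bar>q + 1 - 2 * \<bar>x\<bar>\<bar>) ` {c1 + c2, c3 + c4, c1 - c2, c3 - c4}))"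

end

theory Submission
  imports Defs
begin

text \<open>For even q and 1 \<le> c1, c2, c3, c4 \<le> q/2, two of the values \<bar>q + 1 - 2\<bar>x\<bar>\<bar> coincide
  exactly when q + 1 divides one of the two signed sums c1 \<plusminus> c2 \<plusminus> c3 \<plusminus> c4 attached to the
  pair, and the values for c1 + c2 and c1 - c2 never coincide since q + 1 is odd. Counting the
  coincidences gives f = S - 4, where S is the number of sign patterns for which
  c1 \<plusminus> c2 \<plusminus> c3 \<plusminus> c4 is divisible by q + 1; the Kronecker term accounts for the one
  coincidence c1 - c2 = c3 - c4 = 0 that makes two signed sums vanish. As divisibility is
  invariant under negation, S is symmetric in all four arguments.\<close>

lemma abs_reflect_eq_iff:
  fixes m x y :: int
  shows "\<bar>m - 2 * \<bar>x\<bar>\<bar> = \<bar>m - 2 * \<bar>y\<bar>\<bar> \<longleftrightarrow> \<bar>x\<bar> = \<bar>y\<bar> \<or> \<bar>x\<bar> + \<bar>y\<bar> = m"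
  by (auto simp: abs_eq_iff)

lemma reflect_sum_neq_reflect_diff:
  fixes q x y :: int
  assumes "even q" and "x \<noteq> 0" and "y \<noteq> 0"
  shows "\<bar>q + 1 - 2 * \<bar>x + y\<bar>\<bar> \<noteq> \<bar>q + 1 - 2 * \<bar>x - y\<bar>\<bar>"
proof -
  have "2 * x \<noteq> q + 1" "2 * x \<noteq> - (q + 1)" "2 * y \<noteq> q + 1" "2 * y \<noteq> - (q + 1)"
    using \<open>even q\<close> by presburger+
  then show ?thesis
    using assms(2,3) by (simp add: abs_reflect_eq_iff abs_if)
qed

lemma dvd_iff_abs_lt_double:
  fixes N x :: int
  assumes "\<bar>x\<bar> < 2 * N"
  shows "N dvd x \<longleftrightarrow> x = 0 \<or> \<bar>x\<bar> = N"
proof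
  assume "N dvd x"
  then obtain k where x: "x = N * k" by (elim dvdE)
  moreover have "N > 0" using assms by linarith
  ultimately have "\<bar>k\<bar> < 2" using assms by (auto simp: abs_mult)
  then have "k \<in> {-1, 0, 1}" by auto
  then show "x = 0 \<or> \<bar>x\<bar> = N" using assms x by auto
qed (auto simp: abs_eq_iff)

lemma card_insert4_of_bool:
  assumes "u1 \<noteq> u3" and "u2 \<noteq> u4"
  shows "int (card {u1, u2, u3, u4}) =
    4 - of_bool (u1 = u2) - of_bool (u3 = u2) - of_bool (u3 = u4) - of_bool (u1 = u4)"
  using assms by (auto simp: card_insert_if)

definition signed_sum_count :: "int \<Rightarrow> int \<Rightarrow> int \<Rightarrow> int \<Rightarrow> int \<Rightarrow> int" where
  "signed_sum_count N a b c d =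
     of_bool (N dvd a + b + c + d) + of_bool (N dvd a + b + c - d) +
     of_bool (N dvd a + b - c + d) + of_bool (N dvd a + b - c - d) +
     of_bool (N dvd a - b + c + d) + of_bool (N dvd a - b + c - d) +
     of_bool (N dvd a - b - c + d) + of_bool (N dvd a - b - c - d)"

lemma signed_sum_count_swap:
  "signed_sum_count N a b c d = signed_sum_count N b a c d"
  "signed_sum_count N a b c d = signed_sum_count N a c b d"
  "signed_sum_count N a b c d = signed_sum_count N a b d c"
proof -
  have neg: "N dvd x - y \<longleftrightarrow> N dvd y - x" for x y :: int
    by (metis dvd_minus_iff minus_diff_eq)
  show "signed_sum_count N a b c d = signed_sum_count N b a c d"
       "signed_sum_count N a b c d = signed_sum_count N a c b d"
       "signed_sum_count N a b c d = signed_sum_count N a b d c"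
    unfolding signed_sum_count_def by (simp_all add: algebra_simps neg)
qed

lemma permute4_args_eq:
  fixes F :: "'a \<Rightarrow> 'a \<Rightarrow> 'a \<Rightarrow> 'a \<Rightarrow> 'b" and \<sigma> :: "nat \<Rightarrow> nat"
  assumes "\<And>a b c d. F a b c d = F b a c d"
    and "\<And>a b c d. F a b c d = F a c b d"
    and "\<And>a b c d. F a b c d = F a b d c"
    and "\<sigma> permutes {0..<4}"
  shows "F (x (\<sigma> 0)) (x (\<sigma> 1)) (x (\<sigma> 2)) (x (\<sigma> 3)) = F (x 0) (x 1) (x 2) (x 3)"
proof -
  define G where "G y = F (y 0) (y 1) (y 2) (y 3)" for y :: "nat \<Rightarrow> 'a"
  have G_transpose: "G (y \<circ> Transposition.transpose i j) = G y" if "i < 4" "j < 4" for y i j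
  proof -
    have "i \<in> {0, 1, 2, 3}" "j \<in> {0, 1, 2, 3}" using that by auto
    then show ?thesis
      unfolding G_def by (auto simp: transpose_def assms(1-3))
  qed
  have "G (y \<circ> \<sigma>) = G y" for y
    using assms(4) finite_atLeastLessThan
  proof (induction arbitrary: y rule: permutes_induct)
    case (swap a b p)
    then show ?case
      by (metis G_transpose atLeastLessThan_iff comp_assoc)
  qed simp_all
  then show ?thesis
    unfolding G_def by simp
qed

context
  fixes q a b c d :: int
  assumes q_even: "even q"
    and bounds: "1 \<le> a" "1 \<le> b" "1 \<le> c" "1 \<le> d"
      "2 * a \<le> q" "2 * b \<le> q" "2 * c \<le> q" "2 * d \<le> q"
begin

lemma of_bool_reflect_sum_sum:
  "(of_bool (\<bar>q + 1 - 2 * \<bar>a + b\<bar>\<bar> = \<bar>q + 1 - 2 * \<bar>c + d\<bar>\<bar>) :: int) =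
   of_bool (q + 1 dvd a + b + c + d) + of_bool (q + 1 dvd a + b - c - d)"
proof -
  have "\<bar>a + b + c + d\<bar> < 2 * (q + 1)" "\<bar>a + b - c - d\<bar> < 2 * (q + 1)"
    using bounds by auto
  moreover have "2 * (a + b) \<noteq> q + 1" using q_even by presburger
  ultimately show ?thesis
    using bounds by (simp add: abs_reflect_eq_iff dvd_iff_abs_lt_double abs_if)
qed

lemma of_bool_reflect_sum_diff:
  "(of_bool (\<bar>q + 1 - 2 * \<bar>a + b\<bar>\<bar> = \<bar>q + 1 - 2 * \<bar>c - d\<bar>\<bar>) :: int) =
   of_bool (q + 1 dvd a + b - c + d) + of_bool (q + 1 dvd a + b + c - d)"
proof -
  have "\<bar>a + b - c + d\<bar> < 2 * (q + 1)" "\<bar>a + b + c - d\<bar> < 2 * (q + 1)"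
    using bounds by auto
  moreover have "2 * (a + b) \<noteq> q + 1" using q_even by presburger
  ultimately show ?thesis
    using bounds by (simp add: abs_reflect_eq_iff dvd_iff_abs_lt_double abs_if)
qed

lemma of_bool_reflect_diff_sum:
  "(of_bool (\<bar>q + 1 - 2 * \<bar>a - b\<bar>\<bar> = \<bar>q + 1 - 2 * \<bar>c + d\<bar>\<bar>) :: int) =
   of_bool (q + 1 dvd a - b + c + d) + of_bool (q + 1 dvd a - b - c - d)"
proof -
  have "\<bar>a - b + c + d\<bar> < 2 * (q + 1)" "\<bar>a - b - c - d\<bar> < 2 * (q + 1)"
    using bounds by auto
  moreover have "2 * (c + d) \<noteq> q + 1" using q_even by presburger
  ultimately show ?thesis
    using bounds by (simp add: abs_reflect_eq_iff dvd_iff_abs_lt_double abs_if)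
qed

lemma of_bool_reflect_diff_diff:
  "(of_bool (\<bar>q + 1 - 2 * \<bar>a - b\<bar>\<bar> = \<bar>q + 1 - 2 * \<bar>c - d\<bar>\<bar>) + of_bool (a = b \<and> c = d) :: int) =
   of_bool (q + 1 dvd a - b - c + d) + of_bool (q + 1 dvd a - b + c - d)"
proof -
  have "\<bar>a - b - c + d\<bar> < 2 * (q + 1)" "\<bar>a - b + c - d\<bar> < 2 * (q + 1)"
    using bounds by auto
  then show ?thesis
    using bounds by (simp add: abs_reflect_eq_iff dvd_iff_abs_lt_double abs_if)
qed

lemma fq_eq_signed_sum_count: "fq q a b c d = signed_sum_count (q + 1) a b c d - 4"
proof -
  let ?r = "\<lambda>x. \<bar>q + 1 - 2 * \<bar>x\<bar>\<bar>"
  have "?r (a + b) \<noteq> ?r (a - b)" "?r (c + d) \<noteq> ?r (c - d)"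
    using bounds by (intro reflect_sum_neq_reflect_diff q_even; simp)+
  then have "int (card {?r (a + b), ?r (c + d), ?r (a - b), ?r (c - d)}) =
      4 - of_bool (?r (a + b) = ?r (c + d)) - of_bool (?r (a - b) = ?r (c + d))
        - of_bool (?r (a - b) = ?r (c - d)) - of_bool (?r (a + b) = ?r (c - d))"
    by (rule card_insert4_of_bool)
  moreover have "fq q a b c d =
      of_bool (a = b \<and> c = d) - int (card {?r (a + b), ?r (c + d), ?r (a - b), ?r (c - d)})"
    unfolding fq_def by simp
  ultimately show ?thesis
    using of_bool_reflect_sum_sum of_bool_reflect_sum_diff
      of_bool_reflect_diff_sum of_bool_reflect_diff_diff
    unfolding signed_sum_count_def by linarith
qed

end

theorem corollary4p4:
  fixes q :: int and c :: "nat \<Rightarrow> int" and \<sigma> :: "nat \<Rightarrow> nat"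
  assumes "q \<ge> 2" and "even q"
    and "\<forall>i<4. 1 \<le> c i \<and> 2 * c i \<le> q"
    and "\<sigma> permutes {0..<4}"
  shows "fq q (c (\<sigma> 0)) (c (\<sigma> 1)) (c (\<sigma> 2)) (c (\<sigma> 3)) = fq q (c 0) (c 1) (c 2) (c 3)"
proof -
  have bounds: "1 \<le> c i" "2 * c i \<le> q" if "i < 4" for i
    using assms(3) that by auto
  have \<sigma>_bounds: "1 \<le> c (\<sigma> i)" "2 * c (\<sigma> i) \<le> q" if "i < 4" for i
    using bounds permutes_in_image[OF assms(4)] that by auto
  have "fq q (c (\<sigma> 0)) (c (\<sigma> 1)) (c (\<sigma> 2)) (c (\<sigma> 3)) =
      signed_sum_count (q + 1) (c (\<sigma> 0)) (c (\<sigma> 1)) (c (\<sigma> 2)) (c (\<sigma> 3)) - 4"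
    using \<sigma>_bounds by (intro fq_eq_signed_sum_count \<open>even q\<close>) auto
  also have "\<dots> = signed_sum_count (q + 1) (c 0) (c 1) (c 2) (c 3) - 4"
    using permute4_args_eq[OF signed_sum_count_swap assms(4)] by simp
  also have "\<dots> = fq q (c 0) (c 1) (c 2) (c 3)"
    using bounds by (intro fq_eq_signed_sum_count[symmetric] \<open>even q\<close>) auto
  finally show ?thesis .
qed

end
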